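(* Let $(X,p)$ be a complete partial metric space and $(Y,h)$ a partial metric space, and let $f,g:X\to Y$ be sequentially continuous and consistent. Suppose there are real numbers $r$, $A\ge0$ and $0<c<1$ such that for every $x\in X$ there exists $z\in X$ with $$h(f(z),g(z))-h(f(z),f(z))\le c[h(f(x),g(x))-h(f(x),f(x))],\qquad h(f(z),g(z))-h(g(z),g(z))\le c[h(f(x),g(x))-h(g(x),g(x))],$$ $$r\le p(z,z)\le p(x,z)\le r+A[h(f(x),g(x))-h(f(x),f(x))],\qquad r\le p(z,z)\le p(x,z)\le r+A[h(f(x),g(x))-h(g(x),g(x))]$$ (i.e. $f$ and $g$ are $(f,g)$-mutually $c_r$-contractive). Then $f$ and $g$ have a coincidence point, i.e. there is $a\in X$ with $f(a)=g(a)$.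
   Context: A partial metric on a set $Z$ is $q:Z\times Z\to\mathbb{R}$ with, for all $x,y,z$: $q(x,x)\le q(x,y)$; $q(x,y)=q(y,x)$; $q(x,x)=q(x,y)=q(y,y)$ iff $x=y$; $q(x,y)\le q(x,z)+q(z,y)-q(z,z)$. Each partial metric space carries the topology generated by the balls $\{y\mid q(x,y)-q(x,x)<\epsilon\}$, so $a$ is a limit of $\{x_i\}$ iff for every $\epsilon>0$ there is $N$ with $q(a,x_i)-q(a,a)<\epsilon$ for all $i>N$. $\{x_i\}$ is Cauchy with central distance $r$ if for every $\epsilon>0$ there is $N$ with $|q(x_i,x_j)-r|<\epsilon$ for $i\ge j>N$; a special limit is a limit $a$ with $q(a,a)=r$; the space is complete if every Cauchy sequence has a special limit. $f:X\to Y$ is sequentially continuous if whenever $a$ is a limit of $\{x_i\}$ in $X$, $f(a)$ is a limit of $\{f(x_i)\}$ in $Y$. $f$ is consistent if for all $x,z\in X$, $p(x,x)\le p(z,z)$ implies $h(f(x),f(x))\le h(f(z),f(z))$. *)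

theory Defs
  imports Main "HOL.Real"
begin

definition partial_metric :: "'a set \<Rightarrow> ('a \<Rightarrow> 'a \<Rightarrow> real) \<Rightarrow> bool" where
  "partial_metric Z q \<longleftrightarrow>
     (\<forall>x\<in>Z. \<forall>y\<in>Z. q x x \<le> q x y) \<and>
     (\<forall>x\<in>Z. \<forall>y\<in>Z. q x y = q y x) \<and>
     (\<forall>x\<in>Z. \<forall>y\<in>Z. (q x x = q x y \<and> q x y = q y y) \<longleftrightarrow> x = y) \<and>
     (\<forall>x\<in>Z. \<forall>y\<in>Z. \<forall>z\<in>Z. q x y \<le> q x z + q z y - q z z)"

definition pm_limit :: "('a \<Rightarrow> 'a \<Rightarrow> real) \<Rightarrow> 'a \<Rightarrow> (nat \<Rightarrow> 'a) \<Rightarrow> bool" where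
  "pm_limit q a xs \<longleftrightarrow> (\<forall>\<epsilon>>0. \<exists>N. \<forall>i>N. q a (xs i) - q a a < \<epsilon>)"

definition pm_cauchy :: "('a \<Rightarrow> 'a \<Rightarrow> real) \<Rightarrow> (nat \<Rightarrow> 'a) \<Rightarrow> real \<Rightarrow> bool" where
  "pm_cauchy q xs r \<longleftrightarrow> (\<forall>\<epsilon>>0. \<exists>N. \<forall>i j. i \<ge> j \<and> j > N \<longrightarrow> \<bar>q (xs i) (xs j) - r\<bar> < \<epsilon>)"

definition pm_special_limit :: "('a \<Rightarrow> 'a \<Rightarrow> real) \<Rightarrow> 'a \<Rightarrow> (nat \<Rightarrow> 'a) \<Rightarrow> real \<Rightarrow> bool" where
  "pm_special_limit q a xs r \<longleftrightarrow> pm_limit q a xs \<and> q a a = r"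

definition pm_complete :: "'a set \<Rightarrow> ('a \<Rightarrow> 'a \<Rightarrow> real) \<Rightarrow> bool" where
  "pm_complete Z q \<longleftrightarrow> (\<forall>xs r. (\<forall>i. xs i \<in> Z) \<and> pm_cauchy q xs r \<longrightarrow>
      (\<exists>a\<in>Z. pm_special_limit q a xs r))"

definition seq_continuous ::
  "'a set \<Rightarrow> ('a \<Rightarrow> 'a \<Rightarrow> real) \<Rightarrow> ('b \<Rightarrow> 'b \<Rightarrow> real) \<Rightarrow> ('a \<Rightarrow> 'b) \<Rightarrow> bool" where
  "seq_continuous X p h f \<longleftrightarrow> (\<forall>xs a. (\<forall>i. xs i \<in> X) \<and> a \<in> X \<and> pm_limit p a xs \<longrightarrow>
      pm_limit h (f a) (\<lambda>i. f (xs i)))"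

definition consistent ::
  "'a set \<Rightarrow> ('a \<Rightarrow> 'a \<Rightarrow> real) \<Rightarrow> ('b \<Rightarrow> 'b \<Rightarrow> real) \<Rightarrow> ('a \<Rightarrow> 'b) \<Rightarrow> bool" where
  "consistent X p h f \<longleftrightarrow> (\<forall>x\<in>X. \<forall>z\<in>X. p x x \<le> p z z \<longrightarrow> h (f x) (f x) \<le> h (f z) (f z))"

definition mutually_contractive ::
  "'a set \<Rightarrow> ('a \<Rightarrow> 'a \<Rightarrow> real) \<Rightarrow> ('b \<Rightarrow> 'b \<Rightarrow> real) \<Rightarrow> ('a \<Rightarrow> 'b) \<Rightarrow> ('a \<Rightarrow> 'b)
     \<Rightarrow> real \<Rightarrow> real \<Rightarrow> real \<Rightarrow> bool" where
  "mutually_contractive X p h f g r A c \<longleftrightarrow>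
     (\<forall>x\<in>X. \<exists>z\<in>X.
        h (f z) (g z) - h (f z) (f z) \<le> c * (h (f x) (g x) - h (f x) (f x)) \<and>
        h (f z) (g z) - h (g z) (g z) \<le> c * (h (f x) (g x) - h (g x) (g x)) \<and>
        r \<le> p z z \<and> p z z \<le> p x z \<and> p x z \<le> r + A * (h (f x) (g x) - h (f x) (f x)) \<and>
        p x z \<le> r + A * (h (f x) (g x) - h (g x) (g x)))"

end

theory Submission
  imports Defs Complex_Main
begin

text \<open>Iterating the contraction gives a sequence along which both gaps
  \<open>h(fx,gx) - h(fx,fx)\<close> and \<open>h(fx,gx) - h(gx,gx)\<close> decay geometrically, while the
  steps \<open>p(x\<^sub>n,x\<^sub>n\<^sub>+\<^sub>1)\<close> exceed \<open>r\<close> only by a geometrically small amount; this makes the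
  sequence Cauchy with central distance \<open>r\<close>. At its special limit \<open>a\<close> we have
  \<open>p(a,a) = r \<le> p(x\<^sub>n,x\<^sub>n)\<close>, so consistency gives \<open>h(fa,fa) \<le> h(fx\<^sub>n,fx\<^sub>n)\<close> and likewise
  for \<open>g\<close>; the triangle inequality through \<open>fx\<^sub>n\<close> and \<open>gx\<^sub>n\<close> then squeezes
  \<open>h(fa,ga)\<close> down to both \<open>h(fa,fa)\<close> and \<open>h(ga,ga)\<close>, forcing \<open>fa = ga\<close>.\<close>

lemma partial_metric_self_le:
  "partial_metric Z q \<Longrightarrow> x \<in> Z \<Longrightarrow> y \<in> Z \<Longrightarrow> q x x \<le> q x y"
  unfolding partial_metric_def by blast

lemma partial_metric_sym:
  "partial_metric Z q \<Longrightarrow> x \<in> Z \<Longrightarrow> y \<in> Z \<Longrightarrow> q x y = q y x"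
  unfolding partial_metric_def by blast

lemma partial_metric_eqI:
  "partial_metric Z q \<Longrightarrow> x \<in> Z \<Longrightarrow> y \<in> Z \<Longrightarrow> q x x = q x y \<Longrightarrow> q x y = q y y \<Longrightarrow> x = y"
  unfolding partial_metric_def by blast

lemma partial_metric_triangle:
  "partial_metric Z q \<Longrightarrow> x \<in> Z \<Longrightarrow> y \<in> Z \<Longrightarrow> z \<in> Z \<Longrightarrow> q x y \<le> q x z + q z y - q z z"
  unfolding partial_metric_def by blast

lemma pm_limit_iff_eventually:
  "pm_limit q a xs \<longleftrightarrow> (\<forall>\<epsilon>>0. eventually (\<lambda>i. q a (xs i) - q a a < \<epsilon>) sequentially)"
  unfolding pm_limit_def eventually_sequentially
  by (meson Suc_le_eq less_imp_le_nat)

lemma power_bound_of_contraction: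
  fixes u :: "nat \<Rightarrow> real"
  assumes "0 \<le> c" and "\<And>n. u (Suc n) \<le> c * u n"
  shows "u n \<le> c ^ n * u 0"
proof (induction n)
  case (Suc n)
  have "u (Suc n) \<le> c * u n" by (fact assms(2))
  also have "\<dots> \<le> c * (c ^ n * u 0)" using Suc assms(1) by (rule mult_left_mono)
  finally show ?case by simp
qed simp

lemma tendsto_zero_of_contraction:
  fixes u :: "nat \<Rightarrow> real"
  assumes "0 \<le> c" "c < 1" and "\<And>n. 0 \<le> u n" and "\<And>n. u (Suc n) \<le> c * u n"
  shows "u \<longlonglongrightarrow> 0"
proof (rule tendsto_sandwich[of "\<lambda>_. 0" u sequentially "\<lambda>n. c ^ n * u 0"])
  show "(\<lambda>n. c ^ n * u 0) \<longlonglongrightarrow> 0"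
    using assms(1,2) by (intro tendsto_mult_left_zero LIMSEQ_power_zero) auto
  show "eventually (\<lambda>n. u n \<le> c ^ n * u 0) sequentially"
    using power_bound_of_contraction[of c u] assms(1,4) by simp
qed (use assms(3) in simp_all)

lemma pm_cauchy_of_geometric_steps:
  assumes pm: "partial_metric X q" and X: "\<And>n. xs n \<in> X"
    and c: "0 \<le> c" "c < 1" and K: "0 \<le> K"
    and diag: "\<And>n. r \<le> q (xs n) (xs n)"
    and step: "\<And>n. q (xs n) (xs (Suc n)) \<le> r + K * c ^ n"
  shows "pm_cauchy q xs r"
proof -
  have telescope: "q (xs j) (xs (j + k)) \<le> q (xs j) (xs j) + K * (c ^ j - c ^ (j + k)) / (1 - c)"
    for j k
  proof (induction k)
    case (Suc k)
    let ?m = "j + k"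
    have "q (xs j) (xs (Suc ?m)) \<le> q (xs j) (xs ?m) + q (xs ?m) (xs (Suc ?m)) - q (xs ?m) (xs ?m)"
      using partial_metric_triangle[OF pm X X X] .
    also have "\<dots> \<le> q (xs j) (xs j) + K * (c ^ j - c ^ ?m) / (1 - c) + K * c ^ ?m"
      using Suc step[of ?m] diag[of ?m] by linarith
    also have "\<dots> = q (xs j) (xs j) + K * (c ^ j - c ^ Suc ?m) / (1 - c)"
      using c by (simp add: field_simps)
    finally show ?case by simp
  qed simp
  define M where "M = K + K / (1 - c)"
  have close: "\<bar>q (xs i) (xs j) - r\<bar> \<le> M * c ^ j" if "j \<le> i" for i j
  proof -
    obtain k where i: "i = j + k" using \<open>j \<le> i\<close> le_Suc_ex by blast
    have "c ^ j - c ^ (j + k) \<le> c ^ j" using c by simp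
    then have "K * (c ^ j - c ^ (j + k)) / (1 - c) \<le> K * c ^ j / (1 - c)"
      using c K by (intro divide_right_mono mult_left_mono) auto
    moreover have "q (xs j) (xs j) \<le> r + K * c ^ j"
      using partial_metric_self_le[OF pm X X, of j "Suc j"] step[of j] by linarith
    moreover have "r \<le> q (xs j) (xs i)"
      using diag[of j] partial_metric_self_le[OF pm X X, of j i] by linarith
    moreover have "M * c ^ j = K * c ^ j + K * c ^ j / (1 - c)"
      unfolding M_def by (simp add: algebra_simps)
    ultimately show ?thesis
      using telescope[of j k] partial_metric_sym[OF pm X X, of i j] i by (simp add: abs_le_iff)
  qed
  have "(\<lambda>n. M * c ^ n) \<longlonglongrightarrow> 0"
    using c by (intro tendsto_mult_right_zero LIMSEQ_power_zero) auto
  show ?thesis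
    unfolding pm_cauchy_def
  proof (intro allI impI)
    fix \<epsilon> :: real
    assume "\<epsilon> > 0"
    then have "eventually (\<lambda>n. M * c ^ n < \<epsilon>) sequentially"
      using \<open>(\<lambda>n. M * c ^ n) \<longlonglongrightarrow> 0\<close> by (rule order_tendstoD(2)[rotated])
    then obtain N where N: "\<And>n. n \<ge> N \<Longrightarrow> M * c ^ n < \<epsilon>"
      unfolding eventually_sequentially by blast
    show "\<exists>N. \<forall>i j. j \<le> i \<and> N < j \<longrightarrow> \<bar>q (xs i) (xs j) - r\<bar> < \<epsilon>"
    proof (intro exI[of _ N] allI impI)
      fix i j assume "j \<le> i \<and> N < j"
      then show "\<bar>q (xs i) (xs j) - r\<bar> < \<epsilon>"
        using close[of j i] N[of j] by simp
    qed
  qed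
qed

lemma pm_limits_eq_of_vanishing_gaps:
  assumes pm: "partial_metric Y h" and u: "u \<in> Y" and v: "v \<in> Y"
    and us: "\<And>n. us n \<in> Y" and vs: "\<And>n. vs n \<in> Y"
    and lim_u: "pm_limit h u us" and lim_v: "pm_limit h v vs"
    and self_u: "\<And>n. h u u \<le> h (us n) (us n)" and self_v: "\<And>n. h v v \<le> h (vs n) (vs n)"
    and gap_u: "(\<lambda>n. h (us n) (vs n) - h (us n) (us n)) \<longlonglongrightarrow> 0"
    and gap_v: "(\<lambda>n. h (us n) (vs n) - h (vs n) (vs n)) \<longlonglongrightarrow> 0"
  shows "u = v"
proof -
  have near: "h u v \<le> h u u + \<epsilon> \<and> h u v \<le> h v v + \<epsilon>" if "\<epsilon> > 0" for \<epsilon>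
  proof -
    define \<delta> where "\<delta> = \<epsilon> / 3"
    have "\<delta> > 0" using that by (simp add: \<delta>_def)
    then have "eventually (\<lambda>n. h u (us n) - h u u < \<delta> \<and> h v (vs n) - h v v < \<delta> \<and>
        h (us n) (vs n) - h (us n) (us n) < \<delta> \<and> h (us n) (vs n) - h (vs n) (vs n) < \<delta>)
        sequentially"
      using lim_u lim_v order_tendstoD(2)[OF gap_u] order_tendstoD(2)[OF gap_v]
      unfolding pm_limit_iff_eventually by (intro eventually_conj) simp_all
    then obtain n where n: "h u (us n) - h u u < \<delta>" "h v (vs n) - h v v < \<delta>"
        "h (us n) (vs n) - h (us n) (us n) < \<delta>" "h (us n) (vs n) - h (vs n) (vs n) < \<delta>"
      unfolding eventually_sequentially by blast
    have "h u v \<le> h u (us n) + h (us n) v - h (us n) (us n)"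
      using partial_metric_triangle[OF pm u v us] .
    moreover have "h (us n) v \<le> h (us n) (vs n) + h (vs n) v - h (vs n) (vs n)"
      using partial_metric_triangle[OF pm us v vs] .
    moreover have "h (vs n) v = h v (vs n)" using partial_metric_sym[OF pm vs v] .
    ultimately show ?thesis using n self_u[of n] self_v[of n] unfolding \<delta>_def by linarith
  qed
  have "h u v \<le> h u u" "h u v \<le> h v v"
    using near by (fastforce intro: field_le_epsilon)+
  moreover have "h u u \<le> h u v" "h v v \<le> h u v"
    using partial_metric_self_le[OF pm u v] partial_metric_self_le[OF pm v u]
      partial_metric_sym[OF pm u v] by simp_all
  ultimately show ?thesis by (intro partial_metric_eqI[OF pm u v]) simp_all
qed

definition coincidence_gap_fst :: "('b \<Rightarrow> 'b \<Rightarrow> real) \<Rightarrow> ('a \<Rightarrow> 'b) \<Rightarrow> ('a \<Rightarrow> 'b) \<Rightarrow> 'a \<Rightarrow> real"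
  where "coincidence_gap_fst h f g x = h (f x) (g x) - h (f x) (f x)"

definition coincidence_gap_snd :: "('b \<Rightarrow> 'b \<Rightarrow> real) \<Rightarrow> ('a \<Rightarrow> 'b) \<Rightarrow> ('a \<Rightarrow> 'b) \<Rightarrow> 'a \<Rightarrow> real"
  where "coincidence_gap_snd h f g x = h (f x) (g x) - h (g x) (g x)"

lemma coincidence_gaps_nonneg:
  assumes "partial_metric Y h" "f x \<in> Y" "g x \<in> Y"
  shows "0 \<le> coincidence_gap_fst h f g x" "0 \<le> coincidence_gap_snd h f g x"
  using partial_metric_self_le[OF assms] partial_metric_self_le[OF assms(1,3,2)]
    partial_metric_sym[OF assms]
  unfolding coincidence_gap_fst_def coincidence_gap_snd_def by simp_all

text \<open>The orbit starts at \<open>z x\<^sub>0\<close> rather than \<open>x\<^sub>0\<close>, so that \<open>r \<le> p(x\<^sub>n,x\<^sub>n)\<close> holds for every \<open>n\<close>.\<close>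

lemma mutually_contractive_orbit:
  assumes "mutually_contractive X p h f g r A c" and "x\<^sub>0 \<in> X"
  obtains xs where "\<And>n. xs n \<in> X" "\<And>n. r \<le> p (xs n) (xs n)"
    "\<And>n. p (xs n) (xs (Suc n)) \<le> r + A * coincidence_gap_fst h f g (xs n)"
    "\<And>n. coincidence_gap_fst h f g (xs (Suc n)) \<le> c * coincidence_gap_fst h f g (xs n)"
    "\<And>n. coincidence_gap_snd h f g (xs (Suc n)) \<le> c * coincidence_gap_snd h f g (xs n)"
proof -
  obtain z where z: "\<And>x. x \<in> X \<Longrightarrow> z x \<in> X \<and>
      coincidence_gap_fst h f g (z x) \<le> c * coincidence_gap_fst h f g x \<and>
      coincidence_gap_snd h f g (z x) \<le> c * coincidence_gap_snd h f g x \<and>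
      r \<le> p (z x) (z x) \<and> p x (z x) \<le> r + A * coincidence_gap_fst h f g x"
    using assms(1) unfolding mutually_contractive_def coincidence_gap_fst_def
      coincidence_gap_snd_def by metis
  have iter_X: "(z ^^ n) x\<^sub>0 \<in> X" for n
    by (induction n) (simp_all add: z assms(2))
  show thesis
    by (rule that[of "\<lambda>n. z ((z ^^ n) x\<^sub>0)"]) (simp_all add: z iter_X)
qed

theorem theorem7p11:
  fixes X :: "'a set" and p :: "'a \<Rightarrow> 'a \<Rightarrow> real"
    and Y :: "'b set" and h :: "'b \<Rightarrow> 'b \<Rightarrow> real"
    and f g :: "'a \<Rightarrow> 'b" and r A c :: real
  assumes "X \<noteq> {}" and "partial_metric X p" and "pm_complete X p"
    and "partial_metric Y h"
    and "f ` X \<subseteq> Y" and "g ` X \<subseteq> Y"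
    and "seq_continuous X p h f" and "seq_continuous X p h g"
    and "consistent X p h f" and "consistent X p h g"
    and "A \<ge> 0" and "0 < c" and "c < 1"
    and "mutually_contractive X p h f g r A c"
  shows "\<exists>a\<in>X. f a = g a"
proof -
  obtain x\<^sub>0 where "x\<^sub>0 \<in> X" using assms(1) by blast
  then obtain xs where X: "\<And>n. xs n \<in> X" and diag: "\<And>n. r \<le> p (xs n) (xs n)"
    and step: "\<And>n. p (xs n) (xs (Suc n)) \<le> r + A * coincidence_gap_fst h f g (xs n)"
    and contr_fst: "\<And>n. coincidence_gap_fst h f g (xs (Suc n)) \<le> c * coincidence_gap_fst h f g (xs n)"
    and contr_snd: "\<And>n. coincidence_gap_snd h f g (xs (Suc n)) \<le> c * coincidence_gap_snd h f g (xs n)"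
    using mutually_contractive_orbit[OF assms(14)] by blast
  have Y: "f (xs n) \<in> Y" "g (xs n) \<in> Y" for n using X assms(5,6) by auto
  have gaps_nonneg: "0 \<le> coincidence_gap_fst h f g (xs n)" "0 \<le> coincidence_gap_snd h f g (xs n)"
    for n using coincidence_gaps_nonneg[of Y h f "xs n" g] assms(4) Y by simp_all
  have gap_decay: "coincidence_gap_fst h f g (xs n) \<le> c ^ n * coincidence_gap_fst h f g (xs 0)"
    for n using power_bound_of_contraction[of c "\<lambda>n. coincidence_gap_fst h f g (xs n)"]
      contr_fst assms(12) by simp
  have "p (xs n) (xs (Suc n)) \<le> r + A * coincidence_gap_fst h f g (xs 0) * c ^ n" for n
    using step[of n] mult_left_mono[OF gap_decay[of n] assms(11)] by (simp add: mult_ac)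
  then have "pm_cauchy p xs r"
    using pm_cauchy_of_geometric_steps[OF assms(2), of xs c "A * coincidence_gap_fst h f g (xs 0)"]
      X diag assms(11-13) gaps_nonneg by simp
  then obtain a where a: "a \<in> X" "pm_limit p a xs" "p a a = r"
    using assms(3) X unfolding pm_complete_def pm_special_limit_def by blast
  have "f a = g a"
  proof (rule pm_limits_eq_of_vanishing_gaps[OF assms(4) _ _ Y])
    show "pm_limit h (f a) (\<lambda>n. f (xs n))" "pm_limit h (g a) (\<lambda>n. g (xs n))"
      using assms(7,8) a X unfolding seq_continuous_def by blast+
    show "h (f a) (f a) \<le> h (f (xs n)) (f (xs n))" "h (g a) (g a) \<le> h (g (xs n)) (g (xs n))" for n
      using assms(9,10) a X diag unfolding consistent_def by auto
    show "(\<lambda>n. h (f (xs n)) (g (xs n)) - h (f (xs n)) (f (xs n))) \<longlonglongrightarrow> 0"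
      using tendsto_zero_of_contraction[of c "\<lambda>n. coincidence_gap_fst h f g (xs n)"]
        gaps_nonneg(1) contr_fst assms(12,13)
      unfolding coincidence_gap_fst_def by simp
    show "(\<lambda>n. h (f (xs n)) (g (xs n)) - h (g (xs n)) (g (xs n))) \<longlonglongrightarrow> 0"
      using tendsto_zero_of_contraction[of c "\<lambda>n. coincidence_gap_snd h f g (xs n)"]
        gaps_nonneg(2) contr_snd assms(12,13)
      unfolding coincidence_gap_snd_def by simp
  qed (use a assms(5,6) in auto)
  then show ?thesis using a by blast
qed

end
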